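(* Let $f\in\mathcal{C}(\mathbb{R}^{\mathbb{N}})$ and $x_{0}\in\mathbb{R}^{\mathbb{N}}$ such that $f(x_{0})\neq 0$. Then, $f\notin L^{p}(\mu)$ for every $1\leq p < \infty$. In particular, it holds that $\mathcal{C}(\mathbb{R}^{\mathbb{N}})\cap L^{p}(\mu)=\{0\}$ for each $1\leq p < \infty$.
   Context: $\mathcal{C}(\mathbb{R}^{\mathbb{N}})$ denotes the space of continuous functions $f:\mathbb{R}^{\mathbb{N}}\to\mathbb{R}$, where $\mathbb{R}^{\mathbb{N}}$ carries the product topology. Let $\mathcal{B}$ be the Borel $\sigma$-algebra of $\mathbb{R}$, $\lambda$ the Lebesgue measure, and $\mathcal{B}_{\infty}$ the $\sigma$-algebra on $\mathbb{R}^{\mathbb{N}}$ generated by the cylinder sets $\prod_{i=1}^{m}C_{i}\times\prod_{i=m+1}^{\infty}\mathbb{R}$ with $C_i\in\mathcal{B}$, $m\in\mathbb{N}$ (equal to the Borel $\sigma$-algebra of the product topology). Let $\mathcal{F}(\mathcal{B},\lambda)$ be the set of finite rectangles $\prod_{i\in\mathbb{N}}C_{i}$ with $C_i\in\mathcal{B}$ and $\prod_{i}\lambda(C_i)\in[0,\infty)$, with $\mathrm{vol}(\prod_{i}C_i):=\prod_i\lambda(C_i)$. The measure $\mu$ is the restriction to $\mathcal{B}_{\infty}$ of the outer measure $\mu^{\ast}(A):=\inf\{\sum_{n}\mathrm{vol}(\mathscr{C}_{n}) : \mathscr{C}_{n}\in\mathcal{F}(\mathcal{B},\lambda),\ A\subset\bigcup_{n}\mathscr{C}_{n}\}$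 ($\inf\varnothing=\infty$). *)

theory Defs
  imports "HOL-Analysis.Analysis"
begin

text \<open>R^N is modelled as the type nat => real, which carries the product
topology (instance from Function_Topology).\<close>

definition cylinders :: "(nat \<Rightarrow> real) set set" where
  "cylinders = {Pi\<^sub>E UNIV C | C m. (\<forall>i. C i \<in> sets borel) \<and> (\<forall>i\<ge>m. C i = UNIV)}"

definition B_inf :: "(nat \<Rightarrow> real) set set" where
  "B_inf = sigma_sets UNIV cylinders"

text \<open>A sequence of Borel sets C represents a finite rectangle prod_i C_i with
volume v: the infinite product of the Lebesgue measures converges (as the limit
of partial products, in [0,inf]) to the finite value v.\<close>
definition finite_rect_vol :: "(nat \<Rightarrow> real set) \<Rightarrow> ennreal \<Rightarrow> bool" where
  "finite_rect_vol C v \<longleftrightarrow> (\<forall>i. C i \<in> sets borel) \<and>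
     ((\<lambda>n. \<Prod>i<n. emeasure lborel (C i)) \<longlonglongrightarrow> v) \<and> v < \<infinity>"

definition mu_outer :: "(nat \<Rightarrow> real) set \<Rightarrow> ennreal" where
  "mu_outer A = Inf {(\<Sum>n. v n) | C v.
       (\<forall>n. finite_rect_vol (C n) (v n)) \<and> A \<subseteq> (\<Union>n. Pi\<^sub>E UNIV (C n))}"

definition mu :: "(nat \<Rightarrow> real) measure" where
  "mu = measure_of UNIV B_inf mu_outer"

definition in_Lp :: "(nat \<Rightarrow> real) measure \<Rightarrow> real \<Rightarrow> ((nat \<Rightarrow> real) \<Rightarrow> real) \<Rightarrow> bool" where
  "in_Lp M p f \<longleftrightarrow> f \<in> borel_measurable M \<and> (\<integral>\<^sup>+ x. ennreal (\<bar>f x\<bar> powr p) \<partial>M) < \<infinity>"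

end

theory Submission
  imports Defs "HOL-Probability.Probability"
begin

text \<open>Every neighbourhood of \<open>x0\<close>, in particular one on which \<open>\<bar>f\<bar> > \<bar>f x0\<bar> / 2\<close>, contains a
  cylinder \<open>{x. \<forall>i\<in>F. x i \<in> {x0 i..x0 i + \<delta> i}}\<close> with \<open>F\<close> finite, and this cylinder contains boxes
  of arbitrarily large volume, obtained by stretching a coordinate outside \<open>F\<close>. A box
  \<open>\<Prod>\<^sub>i {a i..a i + l i}\<close> with \<open>l i = 1\<close> for almost all \<open>i\<close> has outer measure at least its volume:
  under the product of the uniform distributions on its sides, every finite rectangle \<open>R\<close> has
  probability at most \<open>vol R / vol box\<close>, while a countable cover of the box has total probability
  at least \<open>1\<close>. Hence the cylinder has infinite measure and \<open>\<integral> \<bar>f\<bar>\<^sup>p = \<infinity>\<close>.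

  For this to be a statement about \<open>mu\<close> rather than \<open>mu_outer\<close>, the cylinder sets must be
  Caratheodory measurable: cutting each rectangle of a cover of \<open>T\<close> along \<open>{x. x k \<in> B}\<close> gives
  covers of the two parts of \<open>T\<close> whose volumes add up to that of the original cover.\<close>

section \<open>Finite rectangles\<close>

lemma prod_lessThan_fun_upd:
  fixes g :: "nat \<Rightarrow> 'a::comm_monoid_mult"
  assumes "k < n"
  shows "(\<Prod>i<n. (g(k := d)) i) = d * (\<Prod>i\<in>{..<n} - {k}. g i)"
proof -
  have "(\<Prod>i<n. (g(k := d)) i) = (g(k := d)) k * (\<Prod>i\<in>{..<n} - {k}. (g(k := d)) i)"
    using assms by (intro prod.remove) auto
  also have "(\<Prod>i\<in>{..<n} - {k}. (g(k := d)) i) = (\<Prod>i\<in>{..<n} - {k}. g i)"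
    by (intro prod.cong) auto
  finally show ?thesis by simp
qed

lemma finite_rect_vol_empty: "finite_rect_vol (\<lambda>_. {}) 0"
proof -
  have "\<forall>\<^sub>F n in sequentially. (\<Prod>i<n. emeasure lborel ({}::real set)) = 0"
    using eventually_gt_at_top[of 0] by eventually_elim simp
  then show ?thesis
    unfolding finite_rect_vol_def by (simp add: tendsto_eventually)
qed

lemma finite_rect_vol_fun_upd_iff:
  assumes "\<And>i. C i \<in> sets borel" and "D \<in> sets borel"
  shows "finite_rect_vol (C(k := D)) v \<longleftrightarrow>
    ((\<lambda>n. emeasure lborel D * (\<Prod>i\<in>{..<n} - {k}. emeasure lborel (C i))) \<longlonglongrightarrow> v) \<and> v < \<infinity>"
proof -
  have "\<forall>\<^sub>F n in sequentially. (\<Prod>i<n. emeasure lborel ((C(k := D)) i)) =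
      emeasure lborel D * (\<Prod>i\<in>{..<n} - {k}. emeasure lborel (C i))"
    using eventually_gt_at_top[of k]
  proof eventually_elim
    case (elim n)
    have "(\<Prod>i<n. emeasure lborel ((C(k := D)) i)) =
        (\<Prod>i<n. ((emeasure lborel \<circ> C)(k := emeasure lborel D)) i)"
      by (intro prod.cong) auto
    also have "\<dots> = emeasure lborel D * (\<Prod>i\<in>{..<n} - {k}. emeasure lborel (C i))"
      using prod_lessThan_fun_upd[OF elim, of "emeasure lborel \<circ> C"] by simp
    finally show ?case .
  qed
  then show ?thesis
    using assms by (auto simp: finite_rect_vol_def dest: tendsto_cong)
qed

lemma eventually_mult_eq_0_if_degenerate:
  fixes c d v :: ennreal and Q :: "nat \<Rightarrow> ennreal"
  assumes "(\<lambda>n. c * Q n) \<longlonglongrightarrow> v" and "v < \<infinity>" and "c = 0 \<or> c = \<infinity>" and "d \<le> c"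
  shows "\<forall>\<^sub>F n in sequentially. d * Q n = 0"
proof (cases "c = 0")
  case False
  with assms(3) have "c = \<infinity>"
    by simp
  have "\<forall>\<^sub>F n in sequentially. c * Q n < \<infinity>"
    using assms(1,2) by (rule order_tendstoD)
  then show ?thesis
    by eventually_elim (use \<open>c = \<infinity>\<close> in \<open>auto simp: ennreal_mult_less_top\<close>)
qed (use assms(4) in simp)

lemma tendsto_cmult_ennreal_cancel:
  fixes c v :: ennreal and Q :: "nat \<Rightarrow> ennreal"
  assumes "(\<lambda>n. c * Q n) \<longlonglongrightarrow> v" and "0 < c" and "c < \<infinity>"
  shows "Q \<longlonglongrightarrow> v / c"
proof -
  have "(\<lambda>n. inverse c * (c * Q n)) \<longlonglongrightarrow> inverse c * v"
    using assms by (intro ennreal_tendsto_cmult) (auto simp: less_top[symmetric])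
  moreover have "inverse c * (c * x) = x" for x
    using assms(2,3)
    by (simp add: mult.assoc[symmetric] mult.commute[of "inverse c"] flip: divide_ennreal_def)
  ultimately show ?thesis
    by (simp add: divide_ennreal_def mult.commute)
qed

text \<open>The volume is only a limit of partial products, so the sides other than the \<open>k\<close>-th need
  not have a volume of their own: \<open>w\<close> is read off from that limit unless \<open>\<lambda>(C k) \<in> {0, \<infinity>}\<close>.\<close>

lemma finite_rect_vol_fun_upd:
  assumes "finite_rect_vol C v"
  obtains w where "v = emeasure lborel (C k) * w"
    and "\<And>D. D \<in> sets borel \<Longrightarrow> emeasure lborel D \<le> emeasure lborel (C k) \<Longrightarrow>
           finite_rect_vol (C(k := D)) (emeasure lborel D * w)"
proof -
  define Q where "Q n = (\<Prod>i\<in>{..<n} - {k}. emeasure lborel (C i))" for n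
  let ?c = "emeasure lborel (C k)"
  have C: "\<And>i. C i \<in> sets borel" and "v < \<infinity>"
    using assms by (auto simp: finite_rect_vol_def)
  have upd: "finite_rect_vol (C(k := D)) u \<longleftrightarrow>
      ((\<lambda>n. emeasure lborel D * Q n) \<longlonglongrightarrow> u) \<and> u < \<infinity>" if "D \<in> sets borel" for D u
    using finite_rect_vol_fun_upd_iff[OF C that] by (simp add: Q_def)
  have lim: "(\<lambda>n. ?c * Q n) \<longlonglongrightarrow> v"
    using upd[of "C k" v] assms C by simp
  consider "?c = 0 \<or> ?c = \<infinity>" | "0 < ?c" "?c < \<infinity>"
    by (metis infinity_ennreal_def less_top not_gr_zero)
  then show ?thesis
  proof cases
    case 1
    note null = eventually_mult_eq_0_if_degenerate[OF lim \<open>v < \<infinity>\<close> 1]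
    have "v = 0"
      using lim tendsto_eventually[OF null[OF order_refl]] by (rule LIMSEQ_unique)
    show ?thesis
    proof (rule that[of 0])
      fix D :: "real set" assume "D \<in> sets borel" "emeasure lborel D \<le> ?c"
      then show "finite_rect_vol (C(k := D)) (emeasure lborel D * 0)"
        using upd null by (simp add: tendsto_eventually)
    qed (simp add: \<open>v = 0\<close>)
  next
    case 2
    show ?thesis
    proof (rule that[of "v / ?c"])
      show "v = ?c * (v / ?c)"
        using 2 by (simp add: ennreal_times_divide mult.commute ennreal_mult_divide_eq)
      fix D :: "real set" assume D: "D \<in> sets borel" "emeasure lborel D \<le> ?c"
      then have "emeasure lborel D < \<infinity>"
        using 2 by auto
      moreover have "v / ?c < \<infinity>"
        using 2 \<open>v < \<infinity>\<close> by (auto simp: less_top[symmetric] ennreal_divide_eq_top_iff)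
      ultimately show "finite_rect_vol (C(k := D)) (emeasure lborel D * (v / ?c))"
        using D tendsto_cmult_ennreal_cancel[OF lim 2]
        by (simp add: upd ennreal_tendsto_cmult ennreal_mult_less_top)
    qed
  qed
qed

lemma finite_rect_vol_split_side:
  assumes "finite_rect_vol C v" and "B \<in> sets borel"
  shows "\<exists>v1 v2. finite_rect_vol (C(k := C k \<inter> B)) v1 \<and> finite_rect_vol (C(k := C k - B)) v2 \<and>
    v1 + v2 = v"
proof -
  obtain w where w: "v = emeasure lborel (C k) * w"
    and upd: "\<And>D. D \<in> sets borel \<Longrightarrow> emeasure lborel D \<le> emeasure lborel (C k) \<Longrightarrow>
           finite_rect_vol (C(k := D)) (emeasure lborel D * w)"
    using finite_rect_vol_fun_upd[OF assms(1)] by blast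
  have Ck: "C k \<in> sets borel"
    using assms(1) by (simp add: finite_rect_vol_def)
  show ?thesis
  proof (intro exI conjI)
    show "finite_rect_vol (C(k := C k \<inter> B)) (emeasure lborel (C k \<inter> B) * w)"
      using Ck assms(2) by (intro upd) (auto intro!: emeasure_mono)
    show "finite_rect_vol (C(k := C k - B)) (emeasure lborel (C k - B) * w)"
      using Ck assms(2) by (intro upd) (auto intro!: emeasure_mono)
    have "emeasure lborel (C k \<inter> B) + emeasure lborel (C k - B) = emeasure lborel (C k)"
      using Ck assms(2) by (subst plus_emeasure) (auto simp: Int_Diff_Un)
    then show "emeasure lborel (C k \<inter> B) * w + emeasure lborel (C k - B) * w = v"
      using w by (simp flip: distrib_right)
  qed
qed

section \<open>Caratheodory measurability of cylinder sets\<close>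

lemma mu_outer_le_suminf:
  "(\<And>n. finite_rect_vol (C n) (v n)) \<Longrightarrow> A \<subseteq> (\<Union>n. Pi\<^sub>E UNIV (C n)) \<Longrightarrow> mu_outer A \<le> (\<Sum>n. v n)"
  unfolding mu_outer_def by (rule Inf_lower) blast

lemma mu_outer_greatest:
  "(\<And>C v. (\<And>n. finite_rect_vol (C n) (v n)) \<Longrightarrow> A \<subseteq> (\<Union>n. Pi\<^sub>E UNIV (C n)) \<Longrightarrow> b \<le> (\<Sum>n. v n))
    \<Longrightarrow> b \<le> mu_outer A"
  unfolding mu_outer_def by (rule Inf_greatest) blast

lemma mu_outer_lessD:
  "mu_outer A < b \<Longrightarrow>
    \<exists>C v. (\<forall>n. finite_rect_vol (C n) (v n)) \<and> A \<subseteq> (\<Union>n. Pi\<^sub>E UNIV (C n)) \<and> (\<Sum>n. v n) < b"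
  unfolding mu_outer_def by (auto simp: Inf_less_iff)

lemma mu_outer_empty: "mu_outer {} = 0"
  using mu_outer_le_suminf[of "\<lambda>_ _. {}" "\<lambda>_. 0" "{}"] finite_rect_vol_empty by simp

lemma mu_outer_mono: "A \<subseteq> B \<Longrightarrow> mu_outer A \<le> mu_outer B"
  unfolding mu_outer_def by (rule Inf_superset_mono) blast

lemma mu_outer_countably_subadditive: "mu_outer (\<Union>i. A i) \<le> (\<Sum>n. mu_outer (A n))"
proof (rule ennreal_le_epsilon)
  fix e :: real assume "0 < e" "(\<Sum>n. mu_outer (A n)) < top"
  then have small: "mu_outer (A n) < mu_outer (A n) + e * (1/2) ^ Suc n" for n
    by (auto simp: less_top dest!: ennreal_suminf_lessD)
  have "\<exists>C v. (\<forall>i. finite_rect_vol (C i) (v i)) \<and> A n \<subseteq> (\<Union>i. Pi\<^sub>E UNIV (C i))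
      \<and> (\<Sum>i. v i) < mu_outer (A n) + e * (1/2) ^ Suc n" for n
    by (rule mu_outer_lessD[OF small])
  then obtain C v where frv: "\<And>n i. finite_rect_vol (C n i) (v n i)"
    and cov: "\<And>n. A n \<subseteq> (\<Union>i. Pi\<^sub>E UNIV (C n i))"
    and sum: "\<And>n. (\<Sum>i. v n i) < mu_outer (A n) + e * (1/2) ^ Suc n"
    by metis
  have "mu_outer (\<Union>n. A n) \<le> (\<Sum>j. case_prod v (prod_decode j))"
  proof (rule mu_outer_le_suminf)
    show "finite_rect_vol (case_prod C (prod_decode j)) (case_prod v (prod_decode j))" for j
      using frv by (simp split: prod.split)
    show "(\<Union>n. A n) \<subseteq> (\<Union>j. Pi\<^sub>E UNIV (case_prod C (prod_decode j)))"
    proof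
      fix x assume "x \<in> (\<Union>n. A n)"
      then obtain n i where "x \<in> Pi\<^sub>E UNIV (C n i)"
        using cov by blast
      then have "x \<in> Pi\<^sub>E UNIV (case_prod C (prod_decode (prod_encode (n, i))))"
        by simp
      then show "x \<in> (\<Union>j. Pi\<^sub>E UNIV (case_prod C (prod_decode j)))"
        by blast
    qed
  qed
  also have "\<dots> = (\<Sum>n. \<Sum>i. v n i)"
    by (rule suminf_ennreal_2dimen[where f="case_prod v", simplified]) simp
  also have "\<dots> \<le> (\<Sum>n. mu_outer (A n) + e * (1/2) ^ Suc n)"
    using sum by (intro suminf_le) (auto intro: less_imp_le)
  also have "\<dots> = (\<Sum>n. mu_outer (A n)) + (\<Sum>n. ennreal e * ennreal ((1/2) ^ Suc n))"
    using \<open>0 < e\<close> by (subst suminf_add[symmetric])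
      (auto simp del: ennreal_suminf_cmult simp add: ennreal_mult[symmetric])
  also have "\<dots> = (\<Sum>n. mu_outer (A n)) + e"
    unfolding ennreal_suminf_cmult
    by (subst suminf_ennreal_eq[OF zero_le_power power_half_series]) auto
  finally show "mu_outer (\<Union>n. A n) \<le> (\<Sum>n. mu_outer (A n)) + e" .
qed

lemma outer_measure_space_mu_outer: "outer_measure_space (Pow UNIV) mu_outer"
  unfolding outer_measure_space_def positive_def increasing_def countably_subadditive_def
  using mu_outer_empty mu_outer_mono mu_outer_countably_subadditive by auto

lemma mu_outer_subadditive: "mu_outer (A \<union> B) \<le> mu_outer A + mu_outer B"
proof -
  interpret ring_of_sets UNIV "Pow UNIV"
    using algebra_Pow algebra.axioms(1) by blast
  have "subadditive (Pow UNIV) mu_outer"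
    using outer_measure_space_mu_outer unfolding outer_measure_space_def
    by (intro countably_subadditive_subadditive) auto
  then have "mu_outer (A \<union> (B - A)) \<le> mu_outer A + mu_outer (B - A)"
    unfolding subadditive_def by blast
  also have "\<dots> \<le> mu_outer A + mu_outer B"
    by (intro add_mono mu_outer_mono) auto
  finally show ?thesis
    by simp
qed

lemma mu_outer_split_coordinate:
  assumes "B \<in> sets borel"
  shows "mu_outer ({x. x k \<in> B} \<inter> T) + mu_outer ({x. x k \<notin> B} \<inter> T) \<le> mu_outer T"
proof (rule mu_outer_greatest)
  fix C :: "nat \<Rightarrow> nat \<Rightarrow> real set" and v :: "nat \<Rightarrow> ennreal"
  assume frv: "\<And>n. finite_rect_vol (C n) (v n)" and cov: "T \<subseteq> (\<Union>n. Pi\<^sub>E UNIV (C n))"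
  have "\<forall>n. \<exists>u1 u2. finite_rect_vol ((C n)(k := C n k \<inter> B)) u1 \<and>
      finite_rect_vol ((C n)(k := C n k - B)) u2 \<and> u1 + u2 = v n"
    using finite_rect_vol_split_side[OF frv assms] by blast
  then obtain v1 v2 where v1: "\<And>n. finite_rect_vol ((C n)(k := C n k \<inter> B)) (v1 n)"
    and v2: "\<And>n. finite_rect_vol ((C n)(k := C n k - B)) (v2 n)"
    and sum: "\<And>n. v1 n + v2 n = v n"
    by metis
  have cover: "{x. x k \<in> D} \<inter> T \<subseteq> (\<Union>n. Pi\<^sub>E UNIV ((C n)(k := C n k \<inter> D)))" for D
  proof
    fix x assume "x \<in> {x. x k \<in> D} \<inter> T"
    then obtain n where "x \<in> Pi\<^sub>E UNIV (C n)" "x k \<in> D"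
      using cov by blast
    then have "x \<in> Pi\<^sub>E UNIV ((C n)(k := C n k \<inter> D))"
      by (auto simp: PiE_iff)
    then show "x \<in> (\<Union>n. Pi\<^sub>E UNIV ((C n)(k := C n k \<inter> D)))"
      by blast
  qed
  have "mu_outer ({x. x k \<in> B} \<inter> T) \<le> (\<Sum>n. v1 n)"
    using v1 cover[of B] by (rule mu_outer_le_suminf)
  moreover have "mu_outer ({x. x k \<notin> B} \<inter> T) \<le> (\<Sum>n. v2 n)"
    using mu_outer_le_suminf[OF v2] cover[of "- B"] by (simp add: Diff_eq)
  ultimately have "mu_outer ({x. x k \<in> B} \<inter> T) + mu_outer ({x. x k \<notin> B} \<inter> T) \<le>
      (\<Sum>n. v1 n) + (\<Sum>n. v2 n)"
    by (rule add_mono)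
  also have "\<dots> = (\<Sum>n. v n)"
    by (subst suminf_add) (auto simp: sum)
  finally show "mu_outer ({x. x k \<in> B} \<inter> T) + mu_outer ({x. x k \<notin> B} \<inter> T) \<le> (\<Sum>n. v n)" .
qed

lemma coordinate_set_in_lambda_system:
  assumes "B \<in> sets borel"
  shows "{x. x k \<in> B} \<in> lambda_system UNIV (Pow UNIV) mu_outer"
proof -
  have "mu_outer ({x. x k \<in> B} \<inter> T) + mu_outer ({x. x k \<notin> B} \<inter> T) = mu_outer T" for T
  proof (rule antisym)
    have "T = ({x. x k \<in> B} \<inter> T) \<union> ({x. x k \<notin> B} \<inter> T)"
      by blast
    then show "mu_outer T \<le> mu_outer ({x. x k \<in> B} \<inter> T) + mu_outer ({x. x k \<notin> B} \<inter> T)"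
      by (metis mu_outer_subadditive)
  qed (rule mu_outer_split_coordinate[OF assms])
  moreover have "UNIV - {x. x k \<in> B} = {x. x k \<notin> B}"
    by blast
  ultimately show ?thesis
    unfolding lambda_system_def by simp
qed

lemma measure_space_mu_outer: "measure_space UNIV B_inf mu_outer"
proof -
  let ?L = "lambda_system UNIV (Pow UNIV) mu_outer"
  have L: "measure_space UNIV ?L mu_outer"
    using sigma_algebra.caratheodory_lemma[OF sigma_algebra_Pow outer_measure_space_mu_outer]
    by simp
  then interpret L: sigma_algebra UNIV ?L
    unfolding measure_space_def by simp
  have "cylinders \<subseteq> ?L"
  proof
    fix X assume "X \<in> cylinders"
    then obtain C where X: "X = Pi\<^sub>E UNIV C" and C: "\<And>i. C i \<in> sets borel"
      unfolding cylinders_def by blast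
    have "X = (\<Inter>i. {x. x i \<in> C i})"
      unfolding X by (auto simp: PiE_iff)
    also have "\<dots> \<in> ?L"
      by (intro L.countable_INT'' L.top coordinate_set_in_lambda_system C) simp_all
    finally show "X \<in> ?L" .
  qed
  then have "B_inf \<subseteq> ?L"
    unfolding B_inf_def by (rule L.sigma_sets_subset)
  moreover have "sigma_algebra UNIV B_inf"
    unfolding B_inf_def by (rule sigma_algebra_sigma_sets) auto
  ultimately show ?thesis
    by (intro measure_down[OF L])
qed

lemma sets_mu: "sets mu = B_inf"
  unfolding mu_def B_inf_def
  by (simp add: sets_measure_of sigma_algebra.sigma_sets_eq sigma_algebra_sigma_sets subset_eq)

lemma emeasure_mu: "A \<in> B_inf \<Longrightarrow> emeasure mu A = mu_outer A"
  using measure_space_mu_outer unfolding mu_def measure_space_def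
  by (intro emeasure_measure_of_sigma) auto

section \<open>Outer measure of boxes\<close>

locale finite_box =
  fixes a l :: "nat \<Rightarrow> real" and S :: "nat set"
  assumes side_pos: "\<And>i. 0 < l i" and finite_S: "finite S"
    and side_eq_1: "\<And>i. i \<notin> S \<Longrightarrow> l i = 1"
begin

definition side :: "nat \<Rightarrow> real set" where
  "side i = {a i..a i + l i}"

definition side_distr :: "nat \<Rightarrow> real measure" where
  "side_distr i = uniform_measure lborel (side i)"

lemma side_in_borel [measurable]: "side i \<in> sets borel"
  by (simp add: side_def)

lemma emeasure_lborel_side: "emeasure lborel (side i) = l i"
  using side_pos[of i] by (simp add: side_def)

lemma sets_side_distr [simp]: "sets (side_distr i) = sets borel"
  by (simp add: side_distr_def)

lemma space_side_distr [simp]: "space (side_distr i) = UNIV"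
  by (simp add: side_distr_def)

lemma prob_space_side_distr: "prob_space (side_distr i)"
  unfolding side_distr_def using emeasure_lborel_side[of i] side_pos[of i]
  by (intro prob_space_uniform_measure) (auto simp: side_def)

sublocale product_prob_space side_distr UNIV
  by (simp add: product_prob_space_def product_prob_space_axioms_def product_sigma_finite_def
      prob_space_side_distr prob_space_imp_sigma_finite)

lemma emeasure_side_distr_le:
  assumes "X \<in> sets borel"
  shows "emeasure (side_distr i) X * l i \<le> emeasure lborel X"
proof -
  have "emeasure (side_distr i) X * l i = emeasure lborel (side i \<inter> X) / l i * l i"
    using assms by (simp add: side_distr_def emeasure_lborel_side)
  also have "\<dots> = emeasure lborel (side i \<inter> X)"
    using side_pos[of i] by (simp add: ennreal_divide_times ennreal_divide_self)
  also have "\<dots> \<le> emeasure lborel X"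
    using assms by (intro emeasure_mono) auto
  finally show ?thesis .
qed

lemma eventually_prod_lessThan_sides:
  "\<forall>\<^sub>F N in sequentially. (\<Prod>i<N. ennreal (l i)) = ennreal (\<Prod>i\<in>S. l i)"
proof -
  obtain N0 where N0: "\<And>i. i \<in> S \<Longrightarrow> i < N0"
    using finite_S finite_nat_bounded by blast
  show ?thesis
    using eventually_ge_at_top[of N0]
  proof eventually_elim
    case (elim N)
    have "(\<Prod>i<N. l i) = (\<Prod>i\<in>S. l i)"
      using N0 elim side_eq_1 by (intro prod.mono_neutral_right) (auto, meson less_le_trans)
    then show ?case
      using side_pos by (simp add: prod_ennreal less_imp_le)
  qed
qed

lemma emeasure_PiM_finite_rect_le:
  assumes "finite_rect_vol C v"
  shows "emeasure (PiM UNIV side_distr) (Pi\<^sub>E UNIV C) * (\<Prod>i\<in>S. l i) \<le> v"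
proof (rule tendsto_lowerbound)
  have C: "\<And>i. C i \<in> sets borel"
    using assms by (simp add: finite_rect_vol_def)
  show "(\<lambda>N. \<Prod>i<N. emeasure lborel (C i)) \<longlonglongrightarrow> v"
    using assms by (simp add: finite_rect_vol_def)
  show "\<forall>\<^sub>F N in sequentially.
      emeasure (PiM UNIV side_distr) (Pi\<^sub>E UNIV C) * (\<Prod>i\<in>S. l i) \<le> (\<Prod>i<N. emeasure lborel (C i))"
    using eventually_prod_lessThan_sides
  proof eventually_elim
    case (elim N)
    have "emeasure (PiM UNIV side_distr) (Pi\<^sub>E UNIV C)
        \<le> emeasure (PiM UNIV side_distr) (prod_emb UNIV side_distr {..<N} (Pi\<^sub>E {..<N} C))"
      using C by (intro emeasure_mono sets_PiM_I) (auto simp: prod_emb_def PiE_iff space_PiM)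
    also have "\<dots> = (\<Prod>i<N. emeasure (side_distr i) (C i))"
      using C by (intro emeasure_PiM_emb) auto
    finally have "emeasure (PiM UNIV side_distr) (Pi\<^sub>E UNIV C) * (\<Prod>i\<in>S. l i)
        \<le> (\<Prod>i<N. emeasure (side_distr i) (C i)) * (\<Prod>i<N. ennreal (l i))"
      using elim by (simp add: mult_right_mono)
    also have "\<dots> = (\<Prod>i<N. emeasure (side_distr i) (C i) * l i)"
      by (simp add: prod.distrib)
    also have "\<dots> \<le> (\<Prod>i<N. emeasure lborel (C i))"
      using C by (intro prod_mono_ennreal emeasure_side_distr_le)
    finally show ?case .
  qed
qed simp

lemma emeasure_PiM_outside_side: "emeasure (PiM UNIV side_distr) {x. x i \<notin> side i} = 0"
proof -
  have "{x. x i \<notin> side i} = {x \<in> space (PiM UNIV side_distr). x i \<in> - side i}"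
    by (auto simp: space_PiM)
  also have "emeasure (PiM UNIV side_distr) \<dots> = emeasure (side_distr i) (- side i)"
    by (rule emeasure_PiM_Collect_single) (auto simp: side_def)
  also have "\<dots> = 0"
    by (simp add: side_distr_def side_def)
  finally show ?thesis .
qed

lemma one_le_suminf_emeasure_cover:
  assumes cover: "Pi UNIV side \<subseteq> (\<Union>n. R n)" and R: "\<And>n. R n \<in> sets (PiM UNIV side_distr)"
  shows "1 \<le> (\<Sum>n. emeasure (PiM UNIV side_distr) (R n))"
proof -
  let ?P = "PiM UNIV side_distr"
  have outside: "{x. x i \<notin> side i} \<in> sets ?P" for i
  proof -
    have "{x. x i \<notin> side i} = {x \<in> space ?P. x i \<in> - side i}"
      by (auto simp: space_PiM)
    also have "\<dots> \<in> sets ?P"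
      by (rule sets_Collect_single) (auto simp: side_def)
    finally show ?thesis .
  qed
  have "1 = emeasure ?P (space ?P)"
    by (simp add: emeasure_space_1)
  also have "\<dots> \<le> emeasure ?P ((\<Union>n. R n) \<union> (\<Union>i. {x. x i \<notin> side i}))"
    using cover R outside by (intro emeasure_mono) (auto simp: space_PiM)
  also have "\<dots> \<le> emeasure ?P (\<Union>n. R n) + emeasure ?P (\<Union>i. {x. x i \<notin> side i})"
    using R outside by (intro emeasure_subadditive) auto
  also have "emeasure ?P (\<Union>i. {x. x i \<notin> side i}) = 0"
    using outside by (intro emeasure_UN_eq_0) (auto simp: emeasure_PiM_outside_side)
  also have "emeasure ?P (\<Union>n. R n) \<le> (\<Sum>n. emeasure ?P (R n))"
    using R by (intro emeasure_subadditive_countably) auto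
  finally show ?thesis
    by simp
qed

lemma box_volume_le_mu_outer:
  assumes "Pi UNIV side \<subseteq> A"
  shows "ennreal (\<Prod>i\<in>S. l i) \<le> mu_outer A"
proof (rule mu_outer_greatest)
  fix C :: "nat \<Rightarrow> nat \<Rightarrow> real set" and v :: "nat \<Rightarrow> ennreal"
  assume frv: "\<And>n. finite_rect_vol (C n) (v n)" and cov: "A \<subseteq> (\<Union>n. Pi\<^sub>E UNIV (C n))"
  let ?P = "PiM UNIV side_distr"
  have R: "Pi\<^sub>E UNIV (C n) \<in> sets ?P" for n
    using frv[of n] by (intro sets_PiM_I_countable) (auto simp: finite_rect_vol_def)
  have "ennreal (\<Prod>i\<in>S. l i) = 1 * ennreal (\<Prod>i\<in>S. l i)"
    by simp
  also have "\<dots> \<le> (\<Sum>n. emeasure ?P (Pi\<^sub>E UNIV (C n))) * (\<Prod>i\<in>S. l i)"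
    using one_le_suminf_emeasure_cover[OF order_trans[OF assms cov] R]
    by (intro mult_right_mono) auto
  also have "\<dots> = (\<Sum>n. emeasure ?P (Pi\<^sub>E UNIV (C n)) * (\<Prod>i\<in>S. l i))"
    by simp
  also have "\<dots> \<le> (\<Sum>n. v n)"
    using frv by (intro suminf_le emeasure_PiM_finite_rect_le) auto
  finally show "ennreal (\<Prod>i\<in>S. l i) \<le> (\<Sum>n. v n)" .
qed

end

section \<open>Open sets have infinite measure\<close>

lemma ennreal_eq_top_if_ge_reals:
  fixes x :: ennreal
  assumes "\<And>r. 0 < r \<Longrightarrow> ennreal r \<le> x"
  shows "x = \<infinity>"
proof (rule ccontr)
  assume "x \<noteq> \<infinity>"
  then obtain r where "x = ennreal r" and "0 \<le> r"
    by (cases x) auto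
  with assms[of "r + 1"] show False
    by simp
qed

lemma mu_outer_cylinder_infinite:
  fixes c \<delta> :: "nat \<Rightarrow> real"
  assumes F: "finite F" and \<delta>: "\<And>i. i \<in> F \<Longrightarrow> 0 < \<delta> i"
    and A: "{x. \<forall>i\<in>F. x i \<in> {c i..c i + \<delta> i}} \<subseteq> A"
  shows "mu_outer A = \<infinity>"
proof (rule ennreal_eq_top_if_ge_reals)
  fix r :: real assume "0 < r"
  obtain m where m: "m \<notin> F"
    using F ex_new_if_finite infinite_UNIV_nat by blast
  define D where "D = (\<Prod>i\<in>F. \<delta> i)"
  have "0 < D"
    unfolding D_def using \<delta> by (simp add: prod_pos)
  define l where "l i = (if i \<in> F then \<delta> i else if i = m then r / D else 1)" for i
  define a where "a i = (if i \<in> F then c i else 0)" for i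
  interpret finite_box a l "insert m F"
    using \<delta> \<open>0 < r\<close> \<open>0 < D\<close> F by unfold_locales (auto simp: l_def)
  have "Pi UNIV side \<subseteq> {x. \<forall>i\<in>F. x i \<in> {c i..c i + \<delta> i}}"
  proof (intro subsetI CollectI ballI)
    fix x i assume "x \<in> Pi UNIV side" and "i \<in> F"
    then have "x i \<in> side i"
      by blast
    then show "x i \<in> {c i..c i + \<delta> i}"
      using \<open>i \<in> F\<close> by (simp add: side_def a_def l_def)
  qed
  then have "ennreal (\<Prod>i\<in>insert m F. l i) \<le> mu_outer A"
    using A by (intro box_volume_le_mu_outer) blast
  moreover have "(\<Prod>i\<in>insert m F. l i) = r / D * D"
    using m F by (simp add: l_def D_def cong: prod.cong)
  ultimately show "ennreal r \<le> mu_outer A"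
    using \<open>0 < D\<close> by simp
qed

lemma PiE_open_in_sets_mu:
  assumes "\<And>i. open (X i)" and "finite {i. X i \<noteq> UNIV}"
  shows "Pi\<^sub>E UNIV X \<in> sets mu"
proof -
  obtain m where "{i. X i \<noteq> UNIV} \<subseteq> {..<m}"
    using finite_nat_bounded assms(2) by blast
  then have "(\<forall>i. X i \<in> sets borel) \<and> (\<forall>i\<ge>m. X i = UNIV)"
    using assms(1) by auto
  then have "Pi\<^sub>E UNIV X \<in> cylinders"
    unfolding cylinders_def by blast
  then show ?thesis
    unfolding sets_mu B_inf_def by (rule sigma_sets.Basic)
qed

lemma mu_outer_open_PiE_infinite:
  assumes "x0 \<in> Pi\<^sub>E UNIV X" and "\<And>i. open (X i)" and "finite {i. X i \<noteq> UNIV}"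
  shows "mu_outer (Pi\<^sub>E UNIV X) = \<infinity>"
proof -
  define F where "F = {i. X i \<noteq> UNIV}"
  have "\<forall>i. \<exists>d>0. {x0 i..x0 i + d} \<subseteq> X i"
  proof
    fix i
    have "x0 i \<in> X i"
      using assms(1) by (simp add: PiE_iff)
    then obtain e where "0 < e" "cball (x0 i) e \<subseteq> X i"
      using assms(2) open_contains_cball by blast
    moreover have "{x0 i..x0 i + e} \<subseteq> cball (x0 i) e"
      by (auto simp: cball_def dist_real_def)
    ultimately show "\<exists>d>0. {x0 i..x0 i + d} \<subseteq> X i"
      by blast
  qed
  then obtain \<delta> where \<delta>: "\<forall>i. 0 < \<delta> i \<and> {x0 i..x0 i + \<delta> i} \<subseteq> X i"
    by (auto dest!: choice)
  have "{x. \<forall>i\<in>F. x i \<in> {x0 i..x0 i + \<delta> i}} \<subseteq> Pi\<^sub>E UNIV X"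
  proof (intro subsetI PiE_I)
    fix x i assume x: "x \<in> {x. \<forall>i\<in>F. x i \<in> {x0 i..x0 i + \<delta> i}}"
    show "x i \<in> X i"
    proof (cases "i \<in> F")
      case True
      then show ?thesis
        using x \<delta> by blast
    qed (simp add: F_def)
  qed simp
  then show ?thesis
    using assms(3) \<delta> by (intro mu_outer_cylinder_infinite[of F \<delta> x0]) (simp_all add: F_def)
qed

lemma open_contains_infinite_mu_set:
  fixes V :: "(nat \<Rightarrow> real) set"
  assumes "open V" and "x0 \<in> V"
  obtains U where "U \<in> sets mu" and "U \<subseteq> V" and "emeasure mu U = \<infinity>"
proof -
  have "openin (product_topology (\<lambda>i. euclidean) UNIV) V"
    using assms(1) by (simp add: open_fun_def)
  from product_topology_open_contains_basis[OF this assms(2)]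
  obtain X where X: "x0 \<in> Pi\<^sub>E UNIV X" "\<And>i. open (X i)" "finite {i. X i \<noteq> UNIV}"
    and "Pi\<^sub>E UNIV X \<subseteq> V"
    by auto
  moreover have "Pi\<^sub>E UNIV X \<in> sets mu"
    using X(2,3) by (rule PiE_open_in_sets_mu)
  moreover from this have "emeasure mu (Pi\<^sub>E UNIV X) = \<infinity>"
    using mu_outer_open_PiE_infinite[OF X] by (simp add: emeasure_mu sets_mu)
  ultimately show ?thesis
    using that by blast
qed

lemma nonzero_continuous_not_in_Lp_mu:
  fixes f :: "(nat \<Rightarrow> real) \<Rightarrow> real"
  assumes "continuous_on UNIV f" and "f x0 \<noteq> 0" and "0 \<le> p"
  shows "\<not> in_Lp mu p f"
proof
  define c where "c = \<bar>f x0\<bar> / 2"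
  have "0 < c"
    using assms(2) by (simp add: c_def)
  have "open {x. c < \<bar>f x\<bar>}"
    using assms(1) by (intro open_Collect_less continuous_intros) auto
  moreover have "x0 \<in> {x. c < \<bar>f x\<bar>}"
    using assms(2) by (simp add: c_def)
  ultimately obtain U where U: "U \<in> sets mu" "U \<subseteq> {x. c < \<bar>f x\<bar>}" "emeasure mu U = \<infinity>"
    by (rule open_contains_infinite_mu_set)
  have "\<infinity> = ennreal (c powr p) * emeasure mu U"
    using U(3) \<open>0 < c\<close> by (simp add: ennreal_mult_top)
  also have "\<dots> = (\<integral>\<^sup>+ x. ennreal (c powr p) * indicator U x \<partial>mu)"
    using U(1) by (rule nn_integral_cmult_indicator[symmetric])
  also have "\<dots> \<le> (\<integral>\<^sup>+ x. ennreal (\<bar>f x\<bar> powr p) \<partial>mu)"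
    using U(2) \<open>0 < c\<close> assms(3)
    by (intro nn_integral_mono) (auto simp: indicator_def intro!: powr_mono2)
  finally have "(\<integral>\<^sup>+ x. ennreal (\<bar>f x\<bar> powr p) \<partial>mu) = \<infinity>"
    by (simp add: top_unique)
  moreover assume "in_Lp mu p f"
  ultimately show False
    by (simp add: in_Lp_def)
qed

theorem theoremA8:
  fixes f :: "(nat \<Rightarrow> real) \<Rightarrow> real" and x0 :: "nat \<Rightarrow> real"
  assumes "continuous_on UNIV f" and "f x0 \<noteq> 0"
  shows "(\<forall>p::real. 1 \<le> p \<longrightarrow> \<not> in_Lp mu p f) \<and>
         (\<forall>p::real. 1 \<le> p \<longrightarrow>
            {g :: (nat \<Rightarrow> real) \<Rightarrow> real. continuous_on UNIV g} \<inter> {g. in_Lp mu p g} = {\<lambda>x. 0})"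
proof (intro conjI allI impI)
  fix p :: real assume "1 \<le> p"
  then show "\<not> in_Lp mu p f"
    using nonzero_continuous_not_in_Lp_mu[OF assms] by simp
  have "g = (\<lambda>x. 0)" if "continuous_on UNIV g" and "in_Lp mu p g" for g :: "(nat \<Rightarrow> real) \<Rightarrow> real"
  proof (rule ext, rule ccontr)
    fix y assume "g y \<noteq> 0"
    then show False
      using nonzero_continuous_not_in_Lp_mu[OF that(1)] that(2) \<open>1 \<le> p\<close> by simp
  qed
  moreover have "in_Lp mu p (\<lambda>x. 0)"
    using \<open>1 \<le> p\<close> by (simp add: in_Lp_def)
  ultimately show "{g. continuous_on UNIV g} \<inter> {g. in_Lp mu p g} = {\<lambda>x. 0}"
    by auto
qed

end
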